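(* Assume (A1)–(A3), (I) and (N) below. Then $\Omega=\Omega(\beta^*_{EGMM})$ is diagonal, and the EGMM weights $\lambda^{EGMM}_\ell=\lambda_\ell(\Omega^{-1})$ equal $$\lambda^{EGMM}_\ell=\frac{\pi_\ell^2p_\ell(1-p_\ell)/\sigma^2_{\epsilon,\ell}}{\sum_{k=1}^L\pi_k^2p_k(1-p_k)/\sigma^2_{\epsilon,k}},\qquad \sigma^2_{\epsilon,\ell}=\frac{[\Omega]_{\ell\ell}}{p_\ell(1-p_\ell)}.$$
   Context: Observe i.i.d. $(Y_i,D_i,\mathbf Z_i)$, $Y_i\in\mathbb R$, $D_i\in\{0,1\}$, $\mathbf Z_i=(Z_{1i},\dots,Z_{Li})'\in\{0,1\}^L$, $L\ge2$; potential outcomes $Y_i(0),Y_i(1)$, compliance type $D_i(\cdot):\{0,1\}^L\to\{0,1\}$, $D_i=D_i(\mathbf Z_i)$, $Y_i=D_iY_i(1)+(1-D_i)Y_i(0)$. $p_\ell=P(Z_{\ell i}=1)$, $\pi_\ell,\rho_\ell$ the differences of $\mathbb E[D_i\mid Z_{\ell i}=z]$, $\mathbb E[Y_i\mid Z_{\ell i}=z]$ between $z=1,0$, $\mathrm{Wald}_\ell=\rho_\ell/\pi_\ell$, $\gamma_\ell=\mathrm{Cov}(D_i,Z_{\ell i})$, $\boldsymbol\gamma=(\gamma_\ell)_\ell$, $\Sigma_Z=\mathrm{Var}(\mathbf Z_i)$, $\lambda_\ell(W)=\gamma_\ell[W\boldsymbol\gamma]_\ell/(\boldsymbol\gamma'W\boldsymbol\gamma)$.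 $g_i(\beta)$ has entries $(Y_i-\beta D_i)(Z_{\ell i}-p_\ell)$, $\Omega(\beta)=\mathbb E[g_i(\beta)g_i(\beta)']$ (positive definite). $\beta^*_{EGMM}$ is a fixed point of $\beta\mapsto\sum_\ell\lambda_\ell(\Omega(\beta)^{-1})\mathrm{Wald}_\ell$. The complier group of instrument $\ell$ is $\mathcal C_\ell=\{i:D_i(1,z_{-\ell})>D_i(0,z_{-\ell})\text{ for some }z_{-\ell}\}$, where $(z_\ell,z_{-\ell})$ denotes the instrument vector with $\ell$-th coordinate $z_\ell$. Assumptions: (A1) $(Y_i(0),Y_i(1),D_i(\cdot))$ independent of $\mathbf Z_i$. (A2) $D_i(z)$ nondecreasing in each coordinate for every $i$. (A3) $p_\ell>0$, $\pi_\ell>0$ for all $\ell$; $\Sigma_Z$ positive definite. (I) $Z_{1i},\dots,Z_{Li}$ mutually independent and jointly independent of $(Y_i(0),Y_i(1),D_i(\cdot))$. (N) $\mathcal C_\ell\cap\mathcal C_k=\emptyset$ for all $\ell\ne k$. *)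

theory Defs
  imports "HOL-Probability.Probability"
begin

(* Population model: units are sample points \<omega> of a probability space M.
   Instruments are indexed by a finite type 'l (L = CARD('l)).
   Y0, Y1: potential outcomes; DT \<omega> : compliance type, a map from instrument vectors
   ('l \<Rightarrow> bool, i.e. {0,1}^L) to {0,1}; Z l: the l-th binary instrument. *)

definition zr :: "('l \<Rightarrow> 'a \<Rightarrow> bool) \<Rightarrow> 'l \<Rightarrow> 'a \<Rightarrow> real" where
  "zr Z l \<omega> = (if Z l \<omega> then 1 else 0)"

definition Dobs :: "('a \<Rightarrow> ('l \<Rightarrow> bool) \<Rightarrow> bool) \<Rightarrow> ('l \<Rightarrow> 'a \<Rightarrow> bool) \<Rightarrow> 'a \<Rightarrow> real" where
  "Dobs DT Z \<omega> = (if DT \<omega> (\<lambda>l. Z l \<omega>) then 1 else 0)"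

definition Yobs :: "('a \<Rightarrow> real) \<Rightarrow> ('a \<Rightarrow> real) \<Rightarrow> ('a \<Rightarrow> ('l \<Rightarrow> bool) \<Rightarrow> bool)
    \<Rightarrow> ('l \<Rightarrow> 'a \<Rightarrow> bool) \<Rightarrow> 'a \<Rightarrow> real" where
  "Yobs Y0 Y1 DT Z \<omega> = Dobs DT Z \<omega> * Y1 \<omega> + (1 - Dobs DT Z \<omega>) * Y0 \<omega>"

definition pinst :: "'a measure \<Rightarrow> ('l \<Rightarrow> 'a \<Rightarrow> bool) \<Rightarrow> 'l \<Rightarrow> real" where
  "pinst M Z l = measure M {\<omega> \<in> space M. Z l \<omega>}"

definition cexp :: "'a measure \<Rightarrow> ('a \<Rightarrow> real) \<Rightarrow> 'a set \<Rightarrow> real" where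
  "cexp M X A = (\<integral>\<omega>. indicator A \<omega> * X \<omega> \<partial>M) / measure M A"

definition zdiff :: "'a measure \<Rightarrow> ('a \<Rightarrow> real) \<Rightarrow> ('l \<Rightarrow> 'a \<Rightarrow> bool) \<Rightarrow> 'l \<Rightarrow> real" where
  "zdiff M X Z l = cexp M X {\<omega> \<in> space M. Z l \<omega>} - cexp M X {\<omega> \<in> space M. \<not> Z l \<omega>}"

definition pi_inst :: "'a measure \<Rightarrow> ('a \<Rightarrow> ('l \<Rightarrow> bool) \<Rightarrow> bool) \<Rightarrow> ('l \<Rightarrow> 'a \<Rightarrow> bool) \<Rightarrow> 'l \<Rightarrow> real" where
  "pi_inst M DT Z l = zdiff M (Dobs DT Z) Z l"

definition rho_inst :: "'a measure \<Rightarrow> ('a \<Rightarrow> real) \<Rightarrow> ('a \<Rightarrow> real) \<Rightarrow> ('a \<Rightarrow> ('l \<Rightarrow> bool) \<Rightarrow> bool)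
    \<Rightarrow> ('l \<Rightarrow> 'a \<Rightarrow> bool) \<Rightarrow> 'l \<Rightarrow> real" where
  "rho_inst M Y0 Y1 DT Z l = zdiff M (Yobs Y0 Y1 DT Z) Z l"

definition wald :: "'a measure \<Rightarrow> ('a \<Rightarrow> real) \<Rightarrow> ('a \<Rightarrow> real) \<Rightarrow> ('a \<Rightarrow> ('l \<Rightarrow> bool) \<Rightarrow> bool)
    \<Rightarrow> ('l \<Rightarrow> 'a \<Rightarrow> bool) \<Rightarrow> 'l \<Rightarrow> real" where
  "wald M Y0 Y1 DT Z l = rho_inst M Y0 Y1 DT Z l / pi_inst M DT Z l"

definition gamma_vec :: "'a measure \<Rightarrow> ('a \<Rightarrow> ('l::finite \<Rightarrow> bool) \<Rightarrow> bool) \<Rightarrow> ('l \<Rightarrow> 'a \<Rightarrow> bool) \<Rightarrow> real^'l" where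
  "gamma_vec M DT Z = (\<chi> l. \<integral>\<omega>. (Dobs DT Z \<omega> - (\<integral>\<omega>'. Dobs DT Z \<omega>' \<partial>M))
                              * (zr Z l \<omega> - (\<integral>\<omega>'. zr Z l \<omega>' \<partial>M)) \<partial>M)"

definition SigmaZ :: "'a measure \<Rightarrow> ('l::finite \<Rightarrow> 'a \<Rightarrow> bool) \<Rightarrow> real^'l^'l" where
  "SigmaZ M Z = (\<chi> l k. \<integral>\<omega>. (zr Z l \<omega> - (\<integral>\<omega>'. zr Z l \<omega>' \<partial>M))
                              * (zr Z k \<omega> - (\<integral>\<omega>'. zr Z k \<omega>' \<partial>M)) \<partial>M)"

definition gmom :: "'a measure \<Rightarrow> ('a \<Rightarrow> real) \<Rightarrow> ('a \<Rightarrow> real) \<Rightarrow> ('a \<Rightarrow> ('l \<Rightarrow> bool) \<Rightarrow> bool)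
    \<Rightarrow> ('l \<Rightarrow> 'a \<Rightarrow> bool) \<Rightarrow> real \<Rightarrow> 'l \<Rightarrow> 'a \<Rightarrow> real" where
  "gmom M Y0 Y1 DT Z \<beta> l \<omega> =
     (Yobs Y0 Y1 DT Z \<omega> - \<beta> * Dobs DT Z \<omega>) * (zr Z l \<omega> - pinst M Z l)"

definition Omega :: "'a measure \<Rightarrow> ('a \<Rightarrow> real) \<Rightarrow> ('a \<Rightarrow> real) \<Rightarrow> ('a \<Rightarrow> ('l::finite \<Rightarrow> bool) \<Rightarrow> bool)
    \<Rightarrow> ('l \<Rightarrow> 'a \<Rightarrow> bool) \<Rightarrow> real \<Rightarrow> real^'l^'l" where
  "Omega M Y0 Y1 DT Z \<beta> =
     (\<chi> l k. \<integral>\<omega>. gmom M Y0 Y1 DT Z \<beta> l \<omega> * gmom M Y0 Y1 DT Z \<beta> k \<omega> \<partial>M)"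

definition lam :: "real^'l^'l \<Rightarrow> real^'l \<Rightarrow> 'l::finite \<Rightarrow> real" where
  "lam W g l = g $ l * (W *v g) $ l / (g \<bullet> (W *v g))"

definition pos_def :: "real^'l^'l \<Rightarrow> bool" where
  "pos_def A \<longleftrightarrow> (\<forall>x::real^'l::finite. x \<noteq> 0 \<longrightarrow> x \<bullet> (A *v x) > 0)"

definition compliers :: "'a measure \<Rightarrow> ('a \<Rightarrow> ('l \<Rightarrow> bool) \<Rightarrow> bool) \<Rightarrow> 'l \<Rightarrow> 'a set" where
  "compliers M DT l = {\<omega> \<in> space M. \<exists>z. DT \<omega> (z(l := True)) \<and> \<not> DT \<omega> (z(l := False))}"

definition indep_rv :: "'a measure \<Rightarrow> 'b measure \<Rightarrow> ('a \<Rightarrow> 'b) \<Rightarrow> 'c measure \<Rightarrow> ('a \<Rightarrow> 'c) \<Rightarrow> bool" where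
  "indep_rv M Ma X Mb Y \<longleftrightarrow> X \<in> measurable M Ma \<and> Y \<in> measurable M Mb \<and>
     prob_space.indep_set M (sets (vimage_algebra (space M) X Ma)) (sets (vimage_algebra (space M) Y Mb))"

end

theory Submission
  imports Defs
begin

text \<open>
  By (A1) and (I), the instrument vector is independent of the unit's type (Y(0), Y(1), D(.))
  and has the product Bernoulli law, so
    Omega(b)_lk = sum_z P(Z = z) E[(Y(z) - b D(z))^2 (z_l - p_l) (z_k - p_k)].
  For l \<noteq> k, monotonicity (A2) and (N) make every unit a non-complier of l or of k, say of l.
  Its residual Y(z) - b D(z) then does not depend on z_l, and averaging z_l - p_l over the
  Bernoulli(p_l) coordinate makes its contribution vanish. Hence Omega(b) is diagonal for
  every b, so lambda_l(Omega^-1) = (gamma_l^2 / Omega_ll) / sum_k gamma_k^2 / Omega_kk.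
  Finally gamma_l = Cov(D, Z_l) = pi_l p_l (1 - p_l), where p_l < 1 because
  Var Z_l = p_l (1 - p_l) is positive.
\<close>

lemma sum_prod_weight_centered_indicator_eq_0:
  fixes q :: "'l::finite \<Rightarrow> bool \<Rightarrow> real" and H :: "('l \<Rightarrow> bool) \<Rightarrow> real"
  assumes q_true: "q l True = p" and q_false: "q l False = 1 - p"
    and H_flip: "\<And>z. H (z(l := True)) = H (z(l := False))"
  shows "(\<Sum>z\<in>UNIV. (\<Prod>j\<in>UNIV. q j (z j)) * H z * ((if z l then 1 else 0) - p)) = 0"
proof -
  define f where "f z = (\<Prod>j\<in>UNIV. q j (z j)) * H z * ((if z l then 1 else 0) - p)" for z
  define flip where "flip z = z(l := \<not> z l)" for z :: "'l \<Rightarrow> bool"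
  have flip_flip: "flip (flip z) = z" for z
    by (simp add: flip_def)
  have flip_at: "flip z l = (\<not> z l)" for z
    by (simp add: flip_def)
  have H_flip_eq: "H (flip z) = H z" for z
    using H_flip[of z] by (cases "z l") (simp_all add: flip_def fun_upd_idem)
  have prod_split: "(\<Prod>j\<in>UNIV. q j (w j)) = q l (w l) * (\<Prod>j\<in>UNIV-{l}. q j (w j))" for w
    by (simp add: prod.remove)
  have prod_flip: "(\<Prod>j\<in>UNIV-{l}. q j (flip z j)) = (\<Prod>j\<in>UNIV-{l}. q j (z j))" for z
    by (intro prod.cong) (auto simp: flip_def)
  have pair: "f z + f (flip z) = 0" for z
    unfolding f_def prod_split[of z] prod_split[of "flip z"] prod_flip H_flip_eq flip_at
    by (cases "z l") (simp_all add: q_true q_false algebra_simps)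
  have "sum f UNIV = sum (f \<circ> flip) UNIV"
    by (rule sum.reindex_bij_witness[of _ flip flip]) (simp_all add: flip_flip)
  then have "2 * sum f UNIV = (\<Sum>z\<in>UNIV. f z + f (flip z))"
    by (simp add: sum.distrib)
  then show ?thesis
    using pair by (simp add: f_def)
qed

lemma vimage_sets_compose_subset:
  assumes "X \<in> measurable M Ma" and "f \<in> measurable Ma N"
  shows "{(f \<circ> X) -` B \<inter> space M | B. B \<in> sets N} \<subseteq> {X -` A \<inter> space M | A. A \<in> sets Ma}"
proof safe
  fix B assume "B \<in> sets N"
  then have "(f \<circ> X) -` B \<inter> space M = X -` (f -` B \<inter> space Ma) \<inter> space M"
    and "f -` B \<inter> space Ma \<in> sets Ma"
    using assms by (auto simp: measurable_def)
  then show "\<exists>A. (f \<circ> X) -` B \<inter> space M = X -` A \<inter> space M \<and> A \<in> sets Ma"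
    by blast
qed

(* The library's indep_var needs both variables to take values in the same measurable space;
   indep_rv does not, and composing with measurable maps into a common space bridges the two. *)
lemma (in prob_space) indep_rv_compose:
  assumes indep: "indep_rv M Ma X Mb Y"
    and f: "f \<in> measurable Ma N" and g: "g \<in> measurable Mb N"
  shows "indep_var N (f \<circ> X) N (g \<circ> Y)"
proof -
  have X: "X \<in> measurable M Ma" and Y: "Y \<in> measurable M Mb"
    and XY: "indep_set (sigma_sets (space M) {X -` A \<inter> space M | A. A \<in> sets Ma})
                       (sigma_sets (space M) {Y -` A \<inter> space M | A. A \<in> sets Mb})"
    using indep unfolding indep_rv_def sets_vimage_algebra by auto
  have "sigma_sets (space M) {(f \<circ> X) -` B \<inter> space M | B. B \<in> sets N}
      \<subseteq> sigma_sets (space M) {X -` A \<inter> space M | A. A \<in> sets Ma}"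
    "sigma_sets (space M) {(g \<circ> Y) -` B \<inter> space M | B. B \<in> sets N}
      \<subseteq> sigma_sets (space M) {Y -` A \<inter> space M | A. A \<in> sets Mb}"
    using vimage_sets_compose_subset[OF X f] vimage_sets_compose_subset[OF Y g]
    by (simp_all add: sigma_sets_subseteq)
  with XY have "indep_set (sigma_sets (space M) {(f \<circ> X) -` B \<inter> space M | B. B \<in> sets N})
                         (sigma_sets (space M) {(g \<circ> Y) -` B \<inter> space M | B. B \<in> sets N})"
    unfolding indep_sets2_eq by blast
  moreover have "random_variable N (f \<circ> X)" "random_variable N (g \<circ> Y)"
    using X Y f g by auto
  ultimately show ?thesis
    unfolding indep_var_eq by blast
qed

lemma (in prob_space) integral_indep_finite_decomp:
  fixes V :: "'a \<Rightarrow> 'v::finite" and T :: "'a \<Rightarrow> 't" and G :: "'t \<Rightarrow> 'v \<Rightarrow> real"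
  assumes indep: "indep_rv M MT T (count_space UNIV) V"
    and G_meas: "\<And>z. (\<lambda>t. G t z) \<in> borel_measurable MT"
    and G_int: "\<And>z. integrable M (\<lambda>\<omega>. G (T \<omega>) z)"
  shows "(\<integral>\<omega>. G (T \<omega>) (V \<omega>) \<partial>M)
       = (\<Sum>z\<in>UNIV. prob {\<omega>\<in>space M. V \<omega> = z} * (\<integral>\<omega>. G (T \<omega>) z \<partial>M))"
proof -
  have V_meas[measurable]: "V \<in> measurable M (count_space UNIV)"
    using indep unfolding indep_rv_def by auto
  have indep_I: "indep_var borel (\<lambda>\<omega>. G (T \<omega>) z) borel (\<lambda>\<omega>. indicator {z} (V \<omega>) :: real)" for z
    using indep_rv_compose[OF indep G_meas[of z], of "indicator {z}"] by (simp add: comp_def)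
  have I_prob: "(\<integral>\<omega>. indicator {z} (V \<omega>) \<partial>M) = prob {\<omega>\<in>space M. V \<omega> = z}" for z
  proof -
    have "(\<integral>\<omega>. indicator {z} (V \<omega>) \<partial>M) = (\<integral>\<omega>. indicator {\<omega>\<in>space M. V \<omega> = z} \<omega> \<partial>M :: real)"
      by (rule Bochner_Integration.integral_cong) (auto simp: indicator_def)
    moreover have "{\<omega>\<in>space M. V \<omega> = z} \<in> events"
      by measurable
    ultimately show ?thesis
      by simp
  qed
  have I_int: "integrable M (\<lambda>\<omega>. indicator {z} (V \<omega>) :: real)" for z
    using V_meas by (intro integrable_const_bound[where B=1]) auto
  have "(\<integral>\<omega>. G (T \<omega>) (V \<omega>) \<partial>M) = (\<integral>\<omega>. (\<Sum>z\<in>UNIV. G (T \<omega>) z * indicator {z} (V \<omega>)) \<partial>M)"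
    by (simp add: indicator_def if_distrib sum.If_cases)
  also have "\<dots> = (\<Sum>z\<in>UNIV. (\<integral>\<omega>. G (T \<omega>) z * indicator {z} (V \<omega>) \<partial>M))"
    by (intro Bochner_Integration.integral_sum indep_var_integrable[OF indep_I G_int I_int])
  also have "\<dots> = (\<Sum>z\<in>UNIV. prob {\<omega>\<in>space M. V \<omega> = z} * (\<integral>\<omega>. G (T \<omega>) z \<partial>M))"
    by (simp add: indep_var_lebesgue_integral[OF indep_I G_int I_int] I_prob mult.commute)
  finally show ?thesis .
qed

lemma (in prob_space) prob_indep_vars_eq_prod:
  fixes Z :: "'i::finite \<Rightarrow> 'a \<Rightarrow> 'b"
  assumes "indep_vars (\<lambda>_. count_space UNIV) Z UNIV"
  shows "prob {\<omega>\<in>space M. (\<lambda>j. Z j \<omega>) = z} = (\<Prod>j\<in>UNIV. prob {\<omega>\<in>space M. Z j \<omega> = z j})"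
proof -
  have "indep_sets (\<lambda>j. {Z j -` A \<inter> space M | A. A \<in> sets (count_space UNIV)}) UNIV"
    using assms unfolding indep_vars_def2 by simp
  then have "prob (\<Inter>j. Z j -` {z j} \<inter> space M) = (\<Prod>j\<in>UNIV. prob (Z j -` {z j} \<inter> space M))"
    by (rule indep_setsD) auto
  moreover have "(\<Inter>j. Z j -` {z j} \<inter> space M) = {\<omega>\<in>space M. (\<lambda>j. Z j \<omega>) = z}"
    by (auto simp: fun_eq_iff)
  moreover have "Z j -` {z j} \<inter> space M = {\<omega>\<in>space M. Z j \<omega> = z j}" for j
    by auto
  ultimately show ?thesis
    by simp
qed

lemma measurable_fun_count_space:
  fixes Z :: "'i::finite \<Rightarrow> 'a \<Rightarrow> 'b::countable"
  assumes "\<And>j. Z j \<in> measurable M (count_space UNIV)"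
  shows "(\<lambda>\<omega> j. Z j \<omega>) \<in> measurable M (count_space UNIV)"
proof -
  have "(\<lambda>\<omega> j. Z j \<omega>) -` {z} \<inter> space M = (\<Inter>j. Z j -` {z j} \<inter> space M)" for z
    by (auto simp: fun_eq_iff)
  moreover have "(\<Inter>j. Z j -` {z j} \<inter> space M) \<in> sets M" for z
    by (intro sets.finite_INT ballI measurable_sets[OF assms]) auto
  ultimately show ?thesis
    by (simp add: measurable_count_space_eq2_countable)
qed

lemma (in prob_space)
  assumes "{\<omega>\<in>space M. P \<omega>} \<in> events"
  shows integrable_indicator_pred: "integrable M (\<lambda>\<omega>. if P \<omega> then 1 else 0 :: real)"
    and expectation_indicator_pred:
      "expectation (\<lambda>\<omega>. if P \<omega> then 1 else 0 :: real) = prob {\<omega>\<in>space M. P \<omega>}"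
proof -
  have eq: "\<omega> \<in> space M \<Longrightarrow> (if P \<omega> then 1 else 0 :: real) = indicator {\<omega>\<in>space M. P \<omega>} \<omega>" for \<omega>
    by simp
  show "integrable M (\<lambda>\<omega>. if P \<omega> then 1 else 0 :: real)"
    using assms by (simp add: Bochner_Integration.integrable_cong[OF refl eq] less_top[symmetric])
  show "expectation (\<lambda>\<omega>. if P \<omega> then 1 else 0 :: real) = prob {\<omega>\<in>space M. P \<omega>}"
    using assms by (simp add: Bochner_Integration.integral_cong[OF refl eq])
qed

lemma (in prob_space) variance_indicator_pred:
  assumes "{\<omega>\<in>space M. P \<omega>} \<in> events"
  defines "p \<equiv> prob {\<omega>\<in>space M. P \<omega>}"
  shows "expectation (\<lambda>\<omega>. ((if P \<omega> then 1 else 0) - p) * ((if P \<omega> then 1 else 0) - p)) = p * (1 - p)"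
proof -
  have "expectation (\<lambda>\<omega>. ((if P \<omega> then 1 else 0) - p) * ((if P \<omega> then 1 else 0) - p))
      = expectation (\<lambda>\<omega>. (1 - 2 * p) * (if P \<omega> then 1 else 0) + p * p)"
    by (rule Bochner_Integration.integral_cong) (auto simp: algebra_simps)
  also have "\<dots> = p * (1 - p)"
    using integrable_indicator_pred[OF assms(1)] expectation_indicator_pred[OF assms(1)]
    by (simp add: p_def prob_space algebra_simps)
  finally show ?thesis .
qed

lemma (in prob_space) covariance_indicator_pred:
  fixes X :: "'a \<Rightarrow> real"
  assumes X: "integrable M X" and ev: "{\<omega>\<in>space M. P \<omega>} \<in> events"
  defines "p \<equiv> prob {\<omega>\<in>space M. P \<omega>}"
  assumes p_pos: "0 < p" and p_less: "p < 1"
  shows "expectation (\<lambda>\<omega>. (X \<omega> - expectation X) * ((if P \<omega> then 1 else 0) - p))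
       = (cexp M X {\<omega>\<in>space M. P \<omega>} - cexp M X {\<omega>\<in>space M. \<not> P \<omega>}) * (p * (1 - p))"
proof -
  define A where "A = {\<omega>\<in>space M. P \<omega>}"
  define B where "B = {\<omega>\<in>space M. \<not> P \<omega>}"
  define a where "a = expectation (\<lambda>\<omega>. indicator A \<omega> * X \<omega>)"
  define b where "b = expectation (\<lambda>\<omega>. indicator B \<omega> * X \<omega>)"
  have B_eq: "B = space M - A"
    by (auto simp: A_def B_def)
  have A_ev: "A \<in> events" and B_ev: "B \<in> events"
    using ev by (auto simp: A_def B_eq)
  have int_A: "integrable M (\<lambda>\<omega>. indicator A \<omega> * X \<omega>)" and int_B: "integrable M (\<lambda>\<omega>. indicator B \<omega> * X \<omega>)"
    using integrable_mult_indicator[OF A_ev X] integrable_mult_indicator[OF B_ev X] by simp_all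
  have "expectation X = expectation (\<lambda>\<omega>. indicator A \<omega> * X \<omega> + indicator B \<omega> * X \<omega>)"
    by (rule Bochner_Integration.integral_cong) (auto simp: A_def B_def indicator_def)
  then have EX: "expectation X = a + b"
    using int_A int_B by (simp add: a_def b_def)
  have "expectation (\<lambda>\<omega>. (X \<omega> - expectation X) * ((if P \<omega> then 1 else 0) - p))
      = expectation (\<lambda>\<omega>. indicator A \<omega> * X \<omega> - p * X \<omega> - expectation X * (if P \<omega> then 1 else 0)
                          + expectation X * p)"
    by (rule Bochner_Integration.integral_cong) (auto simp: A_def indicator_def algebra_simps)
  also have "\<dots> = a - p * expectation X"
    using int_A X integrable_indicator_pred[OF ev] expectation_indicator_pred[OF ev]
    by (simp add: a_def p_def prob_space)
  finally have cov: "expectation (\<lambda>\<omega>. (X \<omega> - expectation X) * ((if P \<omega> then 1 else 0) - p))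
      = a * (1 - p) - b * p"
    by (simp add: EX algebra_simps)
  have "cexp M X A = a / p" and "cexp M X B = b / (1 - p)"
    using prob_compl[OF A_ev] by (simp_all add: cexp_def a_def b_def p_def A_def[symmetric] B_eq)
  moreover have "(a / p - b / (1 - p)) * (p * (1 - p)) = a * (1 - p) - b * p"
    using p_pos p_less by (simp add: field_simps)
  ultimately show ?thesis
    unfolding cov A_def[symmetric] B_def[symmetric] by simp
qed

lemma pos_def_diag_pos:
  fixes A :: "real^'n::finite^'n"
  assumes "pos_def A"
  shows "A $ i $ i > 0"
proof -
  have "axis i 1 \<bullet> (A *v axis i 1) > 0"
    using assms unfolding pos_def_def by (simp add: axis_eq_0_iff)
  moreover have "axis i 1 \<bullet> (A *v axis i (1::real)) = A $ i $ i"
    by (metis cart_eq_inner_axis inner_commute vec_lambda_beta column_def matrix_vector_mult_basis)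
  ultimately show ?thesis
    by simp
qed

lemma matrix_inv_unique:
  fixes A :: "'a::semiring_1^'n::finite^'m::finite"
  assumes "A ** B = mat 1" and "B ** A = mat 1"
  shows "matrix_inv A = B"
proof -
  have inv: "A ** matrix_inv A = mat 1 \<and> matrix_inv A ** A = mat 1"
    unfolding matrix_inv_def by (rule someI[of _ B]) (use assms in simp)
  have "matrix_inv A = (B ** A) ** matrix_inv A"
    by (simp add: assms)
  also have "\<dots> = B"
    by (simp add: matrix_mul_assoc[symmetric] inv)
  finally show ?thesis .
qed

lemma matrix_inv_diagonal:
  fixes A :: "real^'n::finite^'n"
  assumes off_diag: "\<And>i j. i \<noteq> j \<Longrightarrow> A $ i $ j = 0" and diag: "\<And>i. A $ i $ i \<noteq> 0"
  shows "matrix_inv A = (\<chi> i j. if i = j then 1 / A $ i $ i else 0)"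
proof (rule matrix_inv_unique)
  have A_eq: "A = (\<chi> i j. if i = j then A $ i $ i else 0)"
    using off_diag by (simp add: vec_eq_iff)
  show "A ** (\<chi> i j. if i = j then 1 / A $ i $ i else 0) = mat 1"
    and "(\<chi> i j. if i = j then 1 / A $ i $ i else 0) ** A = mat 1"
    by (subst A_eq; simp add: vec_eq_iff matrix_matrix_mult_def mat_def diag if_distrib[of "\<lambda>x. x * _"] cong: if_cong)+
qed

lemma lam_inverse_diagonal:
  fixes A :: "real^'n::finite^'n"
  assumes "\<And>i j. i \<noteq> j \<Longrightarrow> A $ i $ j = 0" and "\<And>i. A $ i $ i \<noteq> 0"
  shows "lam (matrix_inv A) g l = (g $ l)\<^sup>2 / A $ l $ l / (\<Sum>k\<in>UNIV. (g $ k)\<^sup>2 / A $ k $ k)"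
proof -
  have "(matrix_inv A *v g) $ i = g $ i / A $ i $ i" for i
    by (simp add: matrix_inv_diagonal[OF assms] matrix_vector_mult_def if_distrib[of "\<lambda>x. x * _"] cong: if_cong)
  then show ?thesis
    by (simp add: lam_def inner_vec_def power2_eq_square)
qed

lemma mono_switch_invariant_if_not_complier:
  assumes "mono (DT \<omega>)" and "\<omega> \<in> space M" and "\<omega> \<notin> compliers M DT l"
  shows "DT \<omega> (z(l := True)) = DT \<omega> (z(l := False))"
proof -
  have "DT \<omega> (z(l := False)) \<le> DT \<omega> (z(l := True))"
    using assms(1) by (rule monoD) (simp add: le_fun_def)
  then show ?thesis
    using assms(2,3) unfolding compliers_def by auto
qed

(* Y(z) - b D(z) for a unit of type t = (Y(0), Y(1), D(.)) facing the instrument vector z. *)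
definition resid_of_type :: "real \<Rightarrow> real \<times> real \<times> (('l \<Rightarrow> bool) \<Rightarrow> bool) \<Rightarrow> ('l \<Rightarrow> bool) \<Rightarrow> real" where
  "resid_of_type b t z = (case t of (y0, y1, d) \<Rightarrow> if d z then y1 - b else y0)"

lemma gmom_eq_resid_of_type:
  "gmom M Y0 Y1 DT Z b l \<omega>
     = resid_of_type b (Y0 \<omega>, Y1 \<omega>, DT \<omega>) (\<lambda>j. Z j \<omega>) * ((if Z l \<omega> then 1 else 0) - pinst M Z l)"
  by (simp add: gmom_def Yobs_def Dobs_def zr_def resid_of_type_def)

lemma measurable_resid_of_type [measurable]:
  "(\<lambda>t. resid_of_type b t z) \<in> borel_measurable (borel \<Otimes>\<^sub>M (borel \<Otimes>\<^sub>M count_space UNIV))"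
proof -
  have "(\<lambda>t. snd (snd t)) \<in> measurable (borel \<Otimes>\<^sub>M (borel \<Otimes>\<^sub>M count_space UNIV)) (count_space UNIV)"
    by measurable
  then have [measurable]:
    "(\<lambda>t. snd (snd t) z) \<in> measurable (borel \<Otimes>\<^sub>M (borel \<Otimes>\<^sub>M count_space UNIV)) (count_space UNIV)"
    by (rule measurable_compose) simp
  show ?thesis
    unfolding resid_of_type_def case_prod_beta by measurable
qed

lemma resid_of_type_sq_le: "(resid_of_type b (y0, y1, d) z)\<^sup>2 \<le> y0\<^sup>2 + 2 * y1\<^sup>2 + 2 * b\<^sup>2"
proof -
  have "(y1 - b)\<^sup>2 + (y1 + b)\<^sup>2 = 2 * y1\<^sup>2 + 2 * b\<^sup>2"
    by (simp add: power2_eq_square algebra_simps)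
  then have "(y1 - b)\<^sup>2 \<le> y0\<^sup>2 + 2 * y1\<^sup>2 + 2 * b\<^sup>2"
    using zero_le_power2[of "y1 + b"] zero_le_power2[of y0] by linarith
  moreover have "y0\<^sup>2 \<le> y0\<^sup>2 + 2 * y1\<^sup>2 + 2 * b\<^sup>2"
    using zero_le_power2[of y1] zero_le_power2[of b] by linarith
  ultimately show ?thesis
    by (simp add: resid_of_type_def)
qed

lemma (in prob_space) integrable_resid_of_type_sq:
  assumes "(\<lambda>\<omega>. (Y0 \<omega>, Y1 \<omega>, DT \<omega>)) \<in> measurable M (borel \<Otimes>\<^sub>M (borel \<Otimes>\<^sub>M count_space UNIV))"
    and "integrable M (\<lambda>\<omega>. (Y0 \<omega>)\<^sup>2)" and "integrable M (\<lambda>\<omega>. (Y1 \<omega>)\<^sup>2)"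
  shows "integrable M (\<lambda>\<omega>. (resid_of_type b (Y0 \<omega>, Y1 \<omega>, DT \<omega>) z)\<^sup>2)"
proof (rule Bochner_Integration.integrable_bound)
  show "integrable M (\<lambda>\<omega>. (Y0 \<omega>)\<^sup>2 + 2 * (Y1 \<omega>)\<^sup>2 + 2 * b\<^sup>2)"
    using assms(2,3) by simp
  show "(\<lambda>\<omega>. (resid_of_type b (Y0 \<omega>, Y1 \<omega>, DT \<omega>) z)\<^sup>2) \<in> borel_measurable M"
    using measurable_compose[OF assms(1) measurable_resid_of_type] by simp
  show "AE \<omega> in M. norm ((resid_of_type b (Y0 \<omega>, Y1 \<omega>, DT \<omega>) z)\<^sup>2)
                     \<le> norm ((Y0 \<omega>)\<^sup>2 + 2 * (Y1 \<omega>)\<^sup>2 + 2 * b\<^sup>2)"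
  proof (rule AE_I2)
    fix \<omega>
    have "0 \<le> (Y0 \<omega>)\<^sup>2 + 2 * (Y1 \<omega>)\<^sup>2 + 2 * b\<^sup>2"
      by simp
    then show "norm ((resid_of_type b (Y0 \<omega>, Y1 \<omega>, DT \<omega>) z)\<^sup>2)
             \<le> norm ((Y0 \<omega>)\<^sup>2 + 2 * (Y1 \<omega>)\<^sup>2 + 2 * b\<^sup>2)"
      using resid_of_type_sq_le by simp
  qed
qed

lemma (in prob_space) prob_instruments_eq_prod:
  fixes Z :: "'l::finite \<Rightarrow> 'a \<Rightarrow> bool"
  assumes "indep_vars (\<lambda>_. count_space UNIV) Z UNIV"
  shows "prob {\<omega>\<in>space M. (\<lambda>j. Z j \<omega>) = z}
       = (\<Prod>j\<in>UNIV. if z j then pinst M Z j else 1 - pinst M Z j)"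
proof -
  have "prob {\<omega>\<in>space M. Z j \<omega> = z j} = (if z j then pinst M Z j else 1 - pinst M Z j)" for j
  proof -
    have "Z j \<in> measurable M (count_space UNIV)"
      using assms unfolding indep_vars_def2 by simp
    then have ev: "{\<omega>\<in>space M. Z j \<omega>} \<in> events"
      by measurable
    have "{\<omega>\<in>space M. Z j \<omega> = False} = space M - {\<omega>\<in>space M. Z j \<omega>}"
      by auto
    then show ?thesis
      using prob_compl[OF ev] by (cases "z j") (simp_all add: pinst_def)
  qed
  then show ?thesis
    using prob_indep_vars_eq_prod[OF assms] by simp
qed

lemma sum_bernoulli_resid_of_type_offdiag_eq_0:
  fixes p :: "'l::finite \<Rightarrow> real" and d :: "('l \<Rightarrow> bool) \<Rightarrow> bool"
  assumes "l \<noteq> k"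
    and switch: "(\<forall>z. d (z(l := True)) = d (z(l := False))) \<or> (\<forall>z. d (z(k := True)) = d (z(k := False)))"
  shows "(\<Sum>z\<in>UNIV. (\<Prod>j\<in>UNIV. if z j then p j else 1 - p j) * ((resid_of_type b (y0, y1, d) z)\<^sup>2
            * ((if z l then 1 else 0) - p l) * ((if z k then 1 else 0) - p k))) = 0"
proof -
  have vanish: "(\<Sum>z\<in>UNIV. (\<Prod>j\<in>UNIV. if z j then p j else 1 - p j) * ((resid_of_type b (y0, y1, d) z)\<^sup>2
            * ((if z i then 1 else 0) - p i) * ((if z m then 1 else 0) - p m))) = 0"
    if "i \<noteq> m" and "\<forall>z. d (z(i := True)) = d (z(i := False))" for i m
  proof -
    define H where "H z = (resid_of_type b (y0, y1, d) z)\<^sup>2 * ((if z m then 1 else 0) - p m)" for z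
    have "H (z(i := True)) = H (z(i := False))" for z
      using that by (simp add: H_def resid_of_type_def)
    then have "(\<Sum>z\<in>UNIV. (\<Prod>j\<in>UNIV. if z j then p j else 1 - p j) * H z * ((if z i then 1 else 0) - p i)) = 0"
      by (intro sum_prod_weight_centered_indicator_eq_0) simp_all
    then show ?thesis
      by (simp add: H_def mult_ac)
  qed
  from switch show ?thesis
  proof
    assume "\<forall>z. d (z(k := True)) = d (z(k := False))"
    then show ?thesis
      using vanish[of k l] \<open>l \<noteq> k\<close> by (simp add: mult_ac)
  qed (use vanish \<open>l \<noteq> k\<close> in blast)
qed

lemma Omega_offdiag_eq_0:
  fixes DT :: "'a \<Rightarrow> ('l::finite \<Rightarrow> bool) \<Rightarrow> bool"
  assumes "prob_space M"
    and indep: "indep_rv M (borel \<Otimes>\<^sub>M (borel \<Otimes>\<^sub>M count_space UNIV))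
                  (\<lambda>\<omega>. (Y0 \<omega>, Y1 \<omega>, DT \<omega>)) (count_space UNIV) (\<lambda>\<omega> l. Z l \<omega>)"
    and sq_int: "integrable M (\<lambda>\<omega>. (Y0 \<omega>)\<^sup>2)" "integrable M (\<lambda>\<omega>. (Y1 \<omega>)\<^sup>2)"
    and mono: "\<forall>\<omega>\<in>space M. mono (DT \<omega>)"
    and indep_Z: "prob_space.indep_vars M (\<lambda>_. count_space UNIV) Z UNIV"
    and disjoint: "compliers M DT l \<inter> compliers M DT k = {}"
    and "l \<noteq> k"
  shows "Omega M Y0 Y1 DT Z b $ l $ k = 0"
proof -
  interpret prob_space M by fact
  define T where "T \<omega> = (Y0 \<omega>, Y1 \<omega>, DT \<omega>)" for \<omega>
  define w where "w z = (\<Prod>j\<in>UNIV. if z j then pinst M Z j else 1 - pinst M Z j)" for z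
  define G where "G t z = (resid_of_type b t z)\<^sup>2
    * ((if z l then 1 else 0) - pinst M Z l) * ((if z k then 1 else 0) - pinst M Z k)" for t z
  have "integrable M (\<lambda>\<omega>. (resid_of_type b (T \<omega>) z)\<^sup>2)" for z
    using indep unfolding indep_rv_def T_def by (intro integrable_resid_of_type_sq sq_int) simp
  then have G_int: "integrable M (\<lambda>\<omega>. G (T \<omega>) z)" for z
    unfolding G_def by (intro integrable_mult_left)
  have "Omega M Y0 Y1 DT Z b $ l $ k = (\<integral>\<omega>. G (T \<omega>) (\<lambda>j. Z j \<omega>) \<partial>M)"
    by (simp add: Omega_def gmom_eq_resid_of_type G_def T_def power2_eq_square mult_ac)
  also have "\<dots> = (\<Sum>z\<in>UNIV. prob {\<omega>\<in>space M. (\<lambda>j. Z j \<omega>) = z} * (\<integral>\<omega>. G (T \<omega>) z \<partial>M))"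
    by (rule integral_indep_finite_decomp[OF indep[folded T_def] _ G_int]) (simp add: G_def)
  also have "\<dots> = (\<integral>\<omega>. (\<Sum>z\<in>UNIV. w z * G (T \<omega>) z) \<partial>M)"
    using G_int by (simp add: prob_instruments_eq_prod[OF indep_Z] w_def)
  also have "\<dots> = (\<integral>\<omega>. 0 \<partial>M)"
  proof (rule Bochner_Integration.integral_cong)
    fix \<omega> assume "\<omega> \<in> space M"
    then have "\<omega> \<notin> compliers M DT j \<Longrightarrow> DT \<omega> (z(j := True)) = DT \<omega> (z(j := False))" for j z
      using mono by (intro mono_switch_invariant_if_not_complier) auto
    moreover have "\<omega> \<notin> compliers M DT l \<or> \<omega> \<notin> compliers M DT k"
      using disjoint by blast
    ultimately show "(\<Sum>z\<in>UNIV. w z * G (T \<omega>) z) = 0"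
      unfolding w_def G_def T_def using \<open>l \<noteq> k\<close>
      by (intro sum_bernoulli_resid_of_type_offdiag_eq_0) blast+
  qed simp
  finally show ?thesis
    by simp
qed

lemma pinst_less_1:
  assumes "prob_space M" and "Z l \<in> measurable M (count_space UNIV)" and "pos_def (SigmaZ M Z)"
  shows "pinst M Z l < 1"
proof -
  interpret prob_space M by fact
  have ev: "{\<omega>\<in>space M. Z l \<omega>} \<in> events"
    using assms(2) by measurable
  have "SigmaZ M Z $ l $ l = pinst M Z l * (1 - pinst M Z l)"
    using variance_indicator_pred[OF ev] expectation_indicator_pred[OF ev]
    by (simp add: SigmaZ_def zr_def pinst_def)
  moreover have "SigmaZ M Z $ l $ l > 0"
    using assms(3) by (rule pos_def_diag_pos)
  moreover have "0 \<le> pinst M Z l"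
    by (simp add: pinst_def)
  ultimately show ?thesis
    using mult_nonneg_nonpos[of "pinst M Z l" "1 - pinst M Z l"] by fastforce
qed

lemma gamma_vec_eq_pi_inst:
  fixes DT :: "'a \<Rightarrow> ('l::finite \<Rightarrow> bool) \<Rightarrow> bool"
  assumes "prob_space M" and DT_meas: "DT \<in> measurable M (count_space UNIV)"
    and Z_meas: "\<And>j. Z j \<in> measurable M (count_space UNIV)"
    and "0 < pinst M Z l" and "pinst M Z l < 1"
  shows "gamma_vec M DT Z $ l = pi_inst M DT Z l * (pinst M Z l * (1 - pinst M Z l))"
proof -
  interpret prob_space M by fact
  have "(\<lambda>\<omega>. if DT \<omega> z then 1 else 0 :: real) \<in> borel_measurable M" for z
    using measurable_compose[OF DT_meas, of "\<lambda>d. if d z then 1 else 0 :: real" borel] by simp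
  then have "Dobs DT Z \<in> borel_measurable M"
    unfolding Dobs_def using measurable_fun_count_space[OF Z_meas] by (rule measurable_compose_countable)
  then have D_int: "integrable M (Dobs DT Z)"
    by (intro integrable_const_bound[where B=1]) (simp_all add: Dobs_def)
  have ev: "{\<omega>\<in>space M. Z l \<omega>} \<in> events"
    using Z_meas by measurable
  show ?thesis
    using covariance_indicator_pred[OF D_int ev] expectation_indicator_pred[OF ev] assms(4,5)
    by (simp add: gamma_vec_def pi_inst_def zdiff_def zr_def pinst_def)
qed

theorem corollary2:
  fixes M :: "'a measure"
    and Y0 Y1 :: "'a \<Rightarrow> real"
    and DT :: "'a \<Rightarrow> ('l::finite \<Rightarrow> bool) \<Rightarrow> bool"
    and Z :: "'l \<Rightarrow> 'a \<Rightarrow> bool"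
    and \<beta> :: real
  assumes P: "prob_space M"
    and L2: "CARD('l) \<ge> 2"
    and mY0: "Y0 \<in> borel_measurable M" and mY1: "Y1 \<in> borel_measurable M"
    and mDT: "DT \<in> measurable M (count_space UNIV)"
    and mZ: "\<And>l. Z l \<in> measurable M (count_space UNIV)"
    and iY0: "integrable M (\<lambda>\<omega>. (Y0 \<omega>)\<^sup>2)" and iY1: "integrable M (\<lambda>\<omega>. (Y1 \<omega>)\<^sup>2)"
    \<comment> \<open>(A1)\<close>
    and A1: "indep_rv M (borel \<Otimes>\<^sub>M (borel \<Otimes>\<^sub>M count_space UNIV))
               (\<lambda>\<omega>. (Y0 \<omega>, Y1 \<omega>, DT \<omega>)) (count_space UNIV) (\<lambda>\<omega> l. Z l \<omega>)"
    \<comment> \<open>(A2)\<close>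
    and A2: "\<forall>\<omega>\<in>space M. mono (DT \<omega>)"
    \<comment> \<open>(A3)\<close>
    and A3p: "\<forall>l. pinst M Z l > 0"
    and A3pi: "\<forall>l. pi_inst M DT Z l > 0"
    and A3S: "pos_def (SigmaZ M Z)"
    \<comment> \<open>(I): mutual independence of the instruments (joint independence from the types is A1)\<close>
    and I: "prob_space.indep_vars M (\<lambda>_. count_space UNIV) Z UNIV"
    \<comment> \<open>(N)\<close>
    and N: "\<forall>l k. l \<noteq> k \<longrightarrow> compliers M DT l \<inter> compliers M DT k = {}"
    \<comment> \<open>standing assumption: Omega(b) positive definite\<close>
    and OmPD: "\<forall>b. pos_def (Omega M Y0 Y1 DT Z b)"
    \<comment> \<open>beta is an EGMM fixed point\<close>
    and fixpt: "\<beta> = (\<Sum>l\<in>UNIV. lam (matrix_inv (Omega M Y0 Y1 DT Z \<beta>)) (gamma_vec M DT Z) l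
                              * wald M Y0 Y1 DT Z l)"
  shows "(\<forall>l k. l \<noteq> k \<longrightarrow> Omega M Y0 Y1 DT Z \<beta> $ l $ k = 0)
       \<and> (\<forall>l. lam (matrix_inv (Omega M Y0 Y1 DT Z \<beta>)) (gamma_vec M DT Z) l
            = ((pi_inst M DT Z l)\<^sup>2 * pinst M Z l * (1 - pinst M Z l)
                 / (Omega M Y0 Y1 DT Z \<beta> $ l $ l / (pinst M Z l * (1 - pinst M Z l))))
              / (\<Sum>k\<in>UNIV. (pi_inst M DT Z k)\<^sup>2 * pinst M Z k * (1 - pinst M Z k)
                 / (Omega M Y0 Y1 DT Z \<beta> $ k $ k / (pinst M Z k * (1 - pinst M Z k)))))"
proof -
  let ?\<Omega> = "Omega M Y0 Y1 DT Z \<beta>"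
  let ?p = "pinst M Z"
  have off_diag: "?\<Omega> $ l $ k = 0" if "l \<noteq> k" for l k
    using Omega_offdiag_eq_0[OF P A1 iY0 iY1 A2 I] N that by blast
  have diag: "?\<Omega> $ l $ l > 0" for l
    using OmPD by (blast intro: pos_def_diag_pos)
  have "(pi_inst M DT Z l)\<^sup>2 * ?p l * (1 - ?p l) / (?\<Omega> $ l $ l / (?p l * (1 - ?p l)))
      = (gamma_vec M DT Z $ l)\<^sup>2 / ?\<Omega> $ l $ l" for l
  proof -
    have p: "0 < ?p l" "?p l < 1"
      using A3p pinst_less_1[OF P mZ A3S] by auto
    then show ?thesis
      unfolding gamma_vec_eq_pi_inst[OF P mDT mZ p] by (simp add: power2_eq_square field_simps)
  qed
  then show ?thesis
    using off_diag diag lam_inverse_diagonal[of ?\<Omega>] by (simp add: less_imp_neq[symmetric])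
qed

end
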